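(* Let $n\ge 2$. An identity $w=w'$ (with $w,w'\in X^*$) holds in the monoid $\mathrm{Styl}_n$ if and only if the words $w$ and $w'$ have the same set of scattered subwords of length at most $n$.
   Context: A monoid identity $w=w'$ with $w,w'$ in the free monoid $X^*$ holds in a monoid $M$ if $w\varphi=w'\varphi$ for every homomorphism $\varphi\colon X^*\to M$. The stylic monoid $\mathrm{Styl}_n$ is generated by $a_1,\dots,a_n$ subject to: $a_i^2=a_i$ ($1\le i\le n$); $a_ja_ia_k=a_ja_ka_i$ and $a_ia_ka_j=a_ka_ia_j$ for $1\le i<j<k\le n$; $a_ja_ia_i=a_ia_ja_i$ and $a_ja_ja_i=a_ja_ia_j$ for $1\le i<j\le n$. A word $x_1\cdots x_k$ with $x_1,\dots,x_k\in X$ is a scattered subword of length $k$ of $v\in X^*$ if there exist $v_0,\dots,v_k\in X^*$ with $v=v_0x_1v_1\cdots v_{k-1}x_kv_k$. *)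

theory Defs
  imports Main "HOL-Library.Sublist"
begin

text \<open>Words over the generators a_1..a_n of Styl_n are represented as lists of
natural numbers with letters in {1..n} (letter i stands for a_i).\<close>

definition styl_rels :: "nat \<Rightarrow> (nat list \<times> nat list) set" where
  "styl_rels n =
     {([i,i],[i]) | i. 1 \<le> i \<and> i \<le> n}
   \<union> {([j,i,k],[j,k,i]) | i j k. 1 \<le> i \<and> i < j \<and> j < k \<and> k \<le> n}
   \<union> {([i,k,j],[k,i,j]) | i j k. 1 \<le> i \<and> i < j \<and> j < k \<and> k \<le> n}
   \<union> {([j,i,i],[i,j,i]) | i j. 1 \<le> i \<and> i < j \<and> j \<le> n}
   \<union> {([j,j,i],[j,i,j]) | i j. 1 \<le> i \<and> i < j \<and> j \<le> n}"

inductive styl_cong :: "nat \<Rightarrow> nat list \<Rightarrow> nat list \<Rightarrow> bool" for n where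
  rel: "(l, r) \<in> styl_rels n \<Longrightarrow> styl_cong n (u @ l @ v) (u @ r @ v)"
| refl: "styl_cong n u u"
| sym: "styl_cong n u v \<Longrightarrow> styl_cong n v u"
| trans: "styl_cong n u v \<Longrightarrow> styl_cong n v w \<Longrightarrow> styl_cong n u w"

definition styl_words :: "nat \<Rightarrow> nat list set" where
  "styl_words n = {u. set u \<subseteq> {1..n}}"

text \<open>A homomorphism X^* \<rightarrow> Styl_n, each element of Styl_n being represented by a
word over {1..n} (an element of its congruence class).\<close>
definition styl_hom :: "nat \<Rightarrow> ('x list \<Rightarrow> nat list) \<Rightarrow> bool" where
  "styl_hom n \<phi> \<longleftrightarrow>
     (\<forall>w. \<phi> w \<in> styl_words n)
   \<and> styl_cong n (\<phi> []) []
   \<and> (\<forall>u v. styl_cong n (\<phi> (u @ v)) (\<phi> u @ \<phi> v))"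

definition holds_in_styl :: "nat \<Rightarrow> 'x list \<Rightarrow> 'x list \<Rightarrow> bool" where
  "holds_in_styl n w w' \<longleftrightarrow> (\<forall>\<phi>. styl_hom n \<phi> \<longrightarrow> styl_cong n (\<phi> w) (\<phi> w'))"

definition scattered_subwords_le :: "nat \<Rightarrow> 'x list \<Rightarrow> 'x list set" where
  "scattered_subwords_le n w = {s. subseq s w \<and> length s \<le> n}"

end

theory Submission
  imports Defs
begin

(* For a word s of length k \<le> n, send a letter x to the increasing list of those c \<in> {1..k}
   with s ! (k - c) = x. A word v contains s as a scattered subword iff its image contains the
   decreasing word k (k - 1) ... 1, and the defining relations of Styl_n preserve which words
   j (j - 1) ... i are subwords. So identities of Styl_n preserve scattered subwords of length
   at most n.

   Conversely, every word u over {1..n} is congruent in Styl_n to the reading word of its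
   N-tableau, whose bottom row is the set of letters of u and whose higher rows form the
   N-tableau of the word of letters bumped by row insertion. This tableau only depends on the
   subwords of u of length at most n, and substituting words for letters respects this
   equivalence (Simon's congruence); hence every homomorphism sends w and w' to congruent
   words. *)

lemma set_subseq: "subseq xs ys \<Longrightarrow> set xs \<subseteq> set ys"
  by (auto elim: list_emb_set)

lemma sorted_wrt_subseq: "subseq xs ys \<Longrightarrow> sorted_wrt P ys \<Longrightarrow> sorted_wrt P xs"
  by (induction rule: list_emb.induct) (auto dest: set_subseq)

lemma subseq_singleton_right_iff: "subseq d [a] \<longleftrightarrow> d = [] \<or> d = [a]"
  by (simp flip: in_set_subseqs) blast

lemma subseq_pair_right_iff: "subseq d [a,b] \<longleftrightarrow> d = [] \<or> d = [a] \<or> d = [b] \<or> d = [a,b]"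
  by (simp flip: in_set_subseqs) blast

lemma subseq_triple_right_iff:
  "subseq d [a,b,c] \<longleftrightarrow>
     d = [] \<or> d = [a] \<or> d = [b] \<or> d = [c] \<or> d = [a,b] \<or> d = [a,c] \<or> d = [b,c] \<or> d = [a,b,c]"
  by (simp flip: in_set_subseqs) blast

lemma subseq_append3_iff:
  "subseq d (u @ x @ v) \<longleftrightarrow>
     (\<exists>d1 d2 d3. d = d1 @ d2 @ d3 \<and> subseq d1 u \<and> subseq d2 x \<and> subseq d3 v)"
  by (auto simp: subseq_append_iff)

lemma subseq_snoc_append_notin:
  assumes "y \<notin> set z"
  shows "subseq (s @ [y]) (x @ z) \<longleftrightarrow> subseq (s @ [y]) x"
proof
  assume "subseq (s @ [y]) (x @ z)"
  then obtain s1 s2 where s: "s @ [y] = s1 @ s2" "subseq s1 x" "subseq s2 z"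
    by (auto elim: subseq_appendE)
  have "s2 = []"
  proof (rule ccontr)
    assume "s2 \<noteq> []"
    then have "y \<in> set s2"
      using s(1) by (metis last_appendR last_in_set last_snoc)
    then show False
      using assms set_subseq[OF s(3)] by blast
  qed
  then show "subseq (s @ [y]) x"
    using s by simp
qed (rule subseq_rev_drop_many)

lemma subseq_snoc_last_occurrence:
  "p \<notin> set w \<Longrightarrow> subseq (t @ [p]) (v @ p # w) \<longleftrightarrow> subseq t v"
  using subseq_snoc_append_notin[of p w t "v @ [p]"] by simp

lemma subseq_concat_map_mono:
  "subseq v w \<Longrightarrow> subseq (concat (map g v)) (concat (map g w))"
  by (induction rule: list_emb.induct) (auto simp: subseq_drop_many list_emb_append_mono)

lemma subseq_concat_map_map:
  "(\<And>c. c \<in> set e \<Longrightarrow> c \<in> set (g (f c))) \<Longrightarrow> subseq e (concat (map g (map f e)))"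
proof (induction e)
  case (Cons c e)
  then have "subseq ([c] @ e) (g (f c) @ concat (map g (map f e)))"
    by (intro list_emb_append_mono) (auto simp: subseq_singleton_left)
  then show ?case by simp
qed simp

lemma subseq_map_of_subseq_concat_map:
  fixes g :: "'a \<Rightarrow> 'b::linorder list"
  assumes "\<And>x. sorted_wrt (<) (g x)" and "\<And>x c. c \<in> set (g x) \<Longrightarrow> f c = x"
  shows "sorted_wrt (>) e \<Longrightarrow> subseq e (concat (map g v)) \<Longrightarrow> subseq (map f e) v"
proof (induction v arbitrary: e)
  case (Cons x v)
  from Cons.prems(2) obtain e1 e2
    where e: "e = e1 @ e2" "subseq e1 (g x)" "subseq e2 (concat (map g v))"
    by (auto elim: subseq_appendE)
  have "sorted_wrt (>) e1" "sorted_wrt (>) e2"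
    using Cons.prems(1) e(1) by (auto simp: sorted_wrt_append)
  moreover have "sorted_wrt (<) e1"
    using sorted_wrt_subseq[OF e(2) assms(1)] .
  ultimately have "length e1 \<le> 1"
    by (cases e1; cases "tl e1") auto
  then have "subseq (map f e1) [x]"
    using e(2) assms(2) by (cases e1) (auto simp: subseq_singleton_left)
  then have "subseq (map f e1 @ map f e2) ([x] @ v)"
    using Cons.IH[OF \<open>sorted_wrt (>) e2\<close> e(3)] by (rule list_emb_append_mono)
  then show ?case by (simp add: e(1))
qed (auto dest: list_emb_Nil2)

lemma subseq_concat_map_shorten:
  "subseq s (concat (map g w)) \<Longrightarrow>
   \<exists>w0. subseq w0 w \<and> length w0 \<le> length s \<and> subseq s (concat (map g w0))"
proof (induction w arbitrary: s)
  case (Cons x w)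
  from Cons.prems obtain s1 s2
    where s: "s = s1 @ s2" "subseq s1 (g x)" "subseq s2 (concat (map g w))"
    by (auto elim: subseq_appendE)
  obtain w0 where w0: "subseq w0 w" "length w0 \<le> length s2" "subseq s2 (concat (map g w0))"
    using Cons.IH[OF s(3)] by blast
  show ?case
  proof (cases "s1 = []")
    case True
    then show ?thesis
      using w0 s by (intro exI[of _ w0]) auto
  next
    case False
    have "subseq (s1 @ s2) (g x @ concat (map g w0))"
      using s(2) w0(3) by (rule list_emb_append_mono)
    moreover have "length s1 \<ge> 1"
      using False by (cases s1) auto
    ultimately show ?thesis
      using w0 s by (intro exI[of _ "x # w0"]) auto
  qed
qed (auto dest: list_emb_Nil2)

section \<open>Simon's congruence\<close>

definition simon_cong :: "nat \<Rightarrow> 'a list \<Rightarrow> 'a list \<Rightarrow> bool" where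
  "simon_cong k u v \<longleftrightarrow> (\<forall>t. length t \<le> k \<longrightarrow> (subseq t u \<longleftrightarrow> subseq t v))"

lemma scattered_subwords_le_eq_iff_simon_cong:
  "scattered_subwords_le k u = scattered_subwords_le k v \<longleftrightarrow> simon_cong k u v"
  unfolding scattered_subwords_le_def simon_cong_def by blast

lemma simon_cong_sym: "simon_cong k u v \<Longrightarrow> simon_cong k v u"
  unfolding simon_cong_def by blast

lemma simon_cong_set_eq: "simon_cong (Suc k) u v \<Longrightarrow> set u = set v"
proof (intro set_eqI)
  fix x
  assume "simon_cong (Suc k) u v"
  then have "subseq [x] u \<longleftrightarrow> subseq [x] v"
    unfolding simon_cong_def by simp
  then show "x \<in> set u \<longleftrightarrow> x \<in> set v"
    by (simp add: subseq_singleton_left)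
qed

lemma simon_cong_last_occurrence:
  assumes "simon_cong (Suc k) (v @ p # w) (v' @ p # w')" "p \<notin> set w" "p \<notin> set w'"
  shows "simon_cong k v v'"
  unfolding simon_cong_def
proof (intro allI impI)
  fix t :: "'a list"
  assume "length t \<le> k"
  then have "subseq (t @ [p]) (v @ p # w) \<longleftrightarrow> subseq (t @ [p]) (v' @ p # w')"
    using assms(1) unfolding simon_cong_def by simp
  then show "subseq t v \<longleftrightarrow> subseq t v'"
    using assms(2,3) by (simp add: subseq_snoc_last_occurrence)
qed

lemma simon_cong_concat_map:
  assumes "simon_cong k w w'"
  shows "simon_cong k (concat (map g w)) (concat (map g w'))"
proof -
  have transfer: "subseq t (concat (map g u'))"
    if cong: "simon_cong k u u'" and t: "length t \<le> k" "subseq t (concat (map g u))"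
    for u u' t
  proof -
    obtain u0 where u0: "subseq u0 u" "length u0 \<le> length t" "subseq t (concat (map g u0))"
      using subseq_concat_map_shorten[OF t(2)] by blast
    then have "subseq u0 u'"
      using cong t(1) unfolding simon_cong_def by simp
    then have "subseq (concat (map g u0)) (concat (map g u'))"
      by (rule subseq_concat_map_mono)
    then show ?thesis
      using u0(3) by (rule subseq_order.trans[rotated])
  qed
  show ?thesis
    using transfer assms simon_cong_sym unfolding simon_cong_def by blast
qed

lemma styl_cong_context:
  "styl_cong n u v \<Longrightarrow> styl_cong n (x @ u @ y) (x @ v @ y)"
proof (induction rule: styl_cong.induct)
  case (rel l r u v)
  then show ?case using styl_cong.rel[of l r n "x @ u" "v @ y"] by simp
qed (auto intro: styl_cong.intros)

declare styl_cong.trans [trans]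

lemma styl_cong_append_left: "styl_cong n u v \<Longrightarrow> styl_cong n (x @ u) (x @ v)"
  using styl_cong_context[of n u v x "[]"] by simp

lemma styl_cong_append_right: "styl_cong n u v \<Longrightarrow> styl_cong n (u @ y) (v @ y)"
  using styl_cong_context[of n u v "[]" y] by simp

lemma styl_cong_styl_rels: "(l, r) \<in> styl_rels n \<Longrightarrow> styl_cong n l r"
  using styl_cong.rel[of l r n "[]" "[]"] by simp

lemma styl_cong_idem: "1 \<le> i \<Longrightarrow> i \<le> n \<Longrightarrow> styl_cong n [i, i] [i]"
  by (rule styl_cong_styl_rels) (auto simp: styl_rels_def)

lemma styl_cong_jik:
  "1 \<le> i \<Longrightarrow> i < j \<Longrightarrow> j < k \<Longrightarrow> k \<le> n \<Longrightarrow> styl_cong n [j, i, k] [j, k, i]"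
  by (rule styl_cong_styl_rels) (unfold styl_rels_def, blast)

lemma styl_cong_ikj:
  "1 \<le> i \<Longrightarrow> i < j \<Longrightarrow> j < k \<Longrightarrow> k \<le> n \<Longrightarrow> styl_cong n [i, k, j] [k, i, j]"
  by (rule styl_cong_styl_rels) (unfold styl_rels_def, blast)

lemma styl_cong_jii: "1 \<le> i \<Longrightarrow> i < j \<Longrightarrow> j \<le> n \<Longrightarrow> styl_cong n [j, i, i] [i, j, i]"
  by (rule styl_cong_styl_rels) (unfold styl_rels_def, blast)

lemma styl_cong_jji: "1 \<le> i \<Longrightarrow> i < j \<Longrightarrow> j \<le> n \<Longrightarrow> styl_cong n [j, j, i] [j, i, j]"
  by (rule styl_cong_styl_rels) (unfold styl_rels_def, blast)

lemma styl_cong_yay: "1 \<le> a \<Longrightarrow> a < y \<Longrightarrow> y \<le> n \<Longrightarrow> styl_cong n [y, a, y] [y, a]"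
proof -
  assume a: "1 \<le> a" "a < y" "y \<le> n"
  have "styl_cong n [y, a, y] [y, y, a]"
    using a by (intro styl_cong.sym[OF styl_cong_jji]) auto
  also have "styl_cong n \<dots> [y, a]"
    using styl_cong_append_right[OF styl_cong_idem[of y n], of "[a]"] a by simp
  finally show ?thesis .
qed

lemma styl_cong_aya: "1 \<le> a \<Longrightarrow> a < y \<Longrightarrow> y \<le> n \<Longrightarrow> styl_cong n [a, y, a] [y, a]"
proof -
  assume a: "1 \<le> a" "a < y" "y \<le> n"
  have "styl_cong n [a, y, a] [y, a, a]"
    using a by (intro styl_cong.sym[OF styl_cong_jii]) auto
  also have "styl_cong n \<dots> [y, a]"
    using styl_cong_append_left[OF styl_cong_idem[of a n], of "[y]"] a by simp
  finally show ?thesis .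
qed

lemma holds_in_styl_sym: "holds_in_styl n w w' \<Longrightarrow> holds_in_styl n w' w"
  unfolding holds_in_styl_def by (blast intro: styl_cong.sym)

lemma styl_hom_concat_map:
  "(\<And>x. set (g x) \<subseteq> {1..n}) \<Longrightarrow> styl_hom n (\<lambda>v. concat (map g v))"
  unfolding styl_hom_def styl_words_def by (auto intro: styl_cong.refl)

lemma styl_hom_concat_map_cong:
  "styl_hom n \<phi> \<Longrightarrow> styl_cong n (\<phi> w) (concat (map (\<lambda>x. \<phi> [x]) w))"
proof (induction w)
  case Nil
  then show ?case by (simp add: styl_hom_def)
next
  case (Cons x w)
  then have "styl_cong n (\<phi> ([x] @ w)) (\<phi> [x] @ \<phi> w)"
    unfolding styl_hom_def by blast
  also have "styl_cong n \<dots> (\<phi> [x] @ concat (map (\<lambda>x. \<phi> [x]) w))"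
    using Cons by (intro styl_cong_append_left)
  finally show ?case by simp
qed

section \<open>Consecutive decreasing subwords are invariants\<close>

fun consec_desc :: "nat list \<Rightarrow> bool" where
  "consec_desc [] = True"
| "consec_desc [x] = True"
| "consec_desc (x # y # zs) \<longleftrightarrow> x = Suc y \<and> consec_desc (y # zs)"

lemma consec_desc_appendD: "consec_desc (xs @ ys) \<Longrightarrow> consec_desc xs \<and> consec_desc ys"
  by (induction xs rule: consec_desc.induct) (auto elim: consec_desc.elims)

lemma consec_desc_subseq_styl_rels:
  "(l, r) \<in> styl_rels n \<Longrightarrow> consec_desc d \<Longrightarrow> subseq d l \<longleftrightarrow> subseq d r"
  unfolding styl_rels_def
  by (auto simp: subseq_singleton_right_iff subseq_pair_right_iff subseq_triple_right_iff)

lemma consec_desc_subseq_infix: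
  assumes "\<And>d. consec_desc d \<Longrightarrow> subseq d l \<longleftrightarrow> subseq d r" and "consec_desc d"
  shows "subseq d (u @ l @ v) \<longleftrightarrow> subseq d (u @ r @ v)"
  unfolding subseq_append3_iff using assms consec_desc_appendD by metis

lemma styl_cong_consec_desc_subseq:
  "styl_cong n A B \<Longrightarrow> consec_desc d \<Longrightarrow> subseq d A \<longleftrightarrow> subseq d B"
proof (induction rule: styl_cong.induct)
  case (rel l r u v)
  then show ?case using consec_desc_subseq_infix[OF consec_desc_subseq_styl_rels[OF rel(1)]] by blast
qed auto

lemma consec_desc_rev_upt: "consec_desc (rev [1..<Suc k])"
proof (induction k)
  case (Suc k)
  then show ?case by (cases k) auto
qed simp

lemma holds_in_styl_subseq:
  assumes "holds_in_styl n w w'" and "subseq s w" and "length s \<le> n"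
  shows "subseq s w'"
proof -
  define k where "k = length s"
  define desc where "desc = rev [1..<Suc k]"
  define f where "f c = s ! (k - c)" for c
  define g where "g x = filter (\<lambda>c. f c = x) [1..<Suc k]" for x
  have s: "map f desc = s"
  proof (rule nth_equalityI)
    show "length (map f desc) = length s"
      by (simp add: desc_def k_def del: upt_Suc)
    show "map f desc ! i = s ! i" if "i < length (map f desc)" for i
      using that by (simp add: desc_def f_def k_def rev_nth del: upt_Suc)
  qed
  have "styl_hom n (\<lambda>v. concat (map g v))"
    by (rule styl_hom_concat_map) (use assms(3) in \<open>auto simp: g_def k_def\<close>)
  then have cong: "styl_cong n (concat (map g w)) (concat (map g w'))"
    using assms(1) unfolding holds_in_styl_def by blast
  have "subseq desc (concat (map g s))"
    unfolding s[symmetric] by (rule subseq_concat_map_map) (auto simp: g_def desc_def)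
  also have "subseq \<dots> (concat (map g w))"
    using assms(2) by (rule subseq_concat_map_mono)
  finally have "subseq desc (concat (map g w'))"
    using styl_cong_consec_desc_subseq[OF cong] consec_desc_rev_upt by (simp add: desc_def)
  moreover have "sorted_wrt (<) (g x)" for x
    unfolding g_def by (intro sorted_wrt_filter sorted_wrt_upt)
  moreover have "f c = x" if "c \<in> set (g x)" for x c
    using that by (simp add: g_def)
  moreover have "sorted_wrt (>) desc"
    unfolding desc_def sorted_wrt_rev by (rule sorted_wrt_upt)
  ultimately have "subseq (map f desc) w'"
    by (rule subseq_map_of_subseq_concat_map[rotated 3])
  then show ?thesis by (simp add: s)
qed

section \<open>Normal forms: N-tableaux\<close>

abbreviation row :: "nat set \<Rightarrow> nat list" where
  "row S \<equiv> sorted_list_of_set S"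

lemma row_eqI: "finite S \<Longrightarrow> sorted_wrt (<) xs \<Longrightarrow> set xs = S \<Longrightarrow> row S = xs"
  by (metis strict_sorted_equal sorted_list_of_set.strict_sorted_key_list_of_set
      sorted_list_of_set.set_sorted_key_list_of_set)

lemma row_split:
  assumes "finite S" "y \<in> S" "a < y" "\<forall>x\<in>S. a < x \<longrightarrow> y \<le> x"
  shows "row S = row {x\<in>S. x < a} @ (if a \<in> S then [a] else []) @ y # row {x\<in>S. y < x}"
  using assms by (intro row_eqI) (auto simp: sorted_wrt_append not_less order.order_iff_strict)

lemma row_insert_max: "finite S \<Longrightarrow> \<forall>x\<in>S. x < a \<Longrightarrow> row (insert a S) = row S @ [a]"
  by (intro row_eqI) (auto simp: sorted_wrt_append)

(* As in Schensted insertion, inserting a into the row S bumps the least letter y > a; but here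
   y also stays, so that the row becomes insert a S. *)
definition bump :: "nat set \<Rightarrow> nat \<Rightarrow> nat list" where
  "bump S a = (if \<exists>x\<in>S. a < x then [LEAST x. x \<in> S \<and> a < x] else [])"

lemma bump_cases:
  obtains "bump S a = []" "\<forall>x\<in>S. x \<le> a"
  | y where "bump S a = [y]" "y \<in> S" "a < y" "\<forall>x\<in>S. a < x \<longrightarrow> y \<le> x"
proof (cases "\<exists>x\<in>S. a < x")
  case True
  then have "(LEAST x. x \<in> S \<and> a < x) \<in> S \<and> a < (LEAST x. x \<in> S \<and> a < x)"
    by (metis (mono_tags, lifting) LeastI)
  then show ?thesis
    using True that(2) by (simp add: bump_def Least_le)
qed (use that(1) in \<open>auto simp: bump_def not_less\<close>)

lemma set_bumpD: "y \<in> set (bump S a) \<Longrightarrow> y \<in> S \<and> a < y \<and> (\<forall>x\<in>S. a < x \<longrightarrow> y \<le> x)"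
  by (cases rule: bump_cases[of S a]) auto

lemma bump_eqI: "y \<in> S \<Longrightarrow> a < y \<Longrightarrow> \<forall>x\<in>S. a < x \<longrightarrow> y \<le> x \<Longrightarrow> bump S a = [y]"
  by (cases rule: bump_cases[of S a]) (auto intro: antisym)

lemma styl_cong_row_snoc_smaller:
  "sorted_wrt (<) (z # H) \<Longrightarrow> 1 \<le> a \<Longrightarrow> a < z \<Longrightarrow> \<forall>h\<in>set H. h \<le> n
   \<Longrightarrow> styl_cong n (z # H @ [a]) (z # a # H)"
proof (induction H arbitrary: z)
  case (Cons h H)
  have "z # (h # H) @ [a] = [z] @ (h # H @ [a])"
    by simp
  also have "styl_cong n \<dots> ([z] @ (h # a # H))"
    using Cons by (intro styl_cong_append_left Cons.IH) auto
  also have "\<dots> = [z, h, a] @ H"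
    by simp
  also have "styl_cong n \<dots> ([z, a, h] @ H)"
    using Cons.prems by (intro styl_cong_append_right styl_cong.sym[OF styl_cong_jik]) auto
  finally show ?case by simp
qed (simp add: styl_cong.refl)

lemma styl_cong_row_prepend_larger:
  "sorted_wrt (<) (L @ [b]) \<Longrightarrow> b < y \<Longrightarrow> y \<le> n \<Longrightarrow> \<forall>x\<in>set L. 1 \<le> x
   \<Longrightarrow> styl_cong n (L @ [y, b]) (y # L @ [b])"
proof (induction L arbitrary: b rule: rev_induct)
  case (snoc l L)
  have l: "sorted_wrt (<) (L @ [l])" "l < b"
    using snoc.prems by (auto simp: sorted_wrt_append)
  have "styl_cong n ((L @ [l]) @ [y, b]) (L @ [y, l, b])"
    using styl_cong_append_left[OF styl_cong_ikj[of l b y n], of L] snoc.prems l by simp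
  also have "\<dots> = (L @ [y, l]) @ [b]"
    by simp
  also have "styl_cong n \<dots> ((y # L @ [l]) @ [b])"
    using snoc.prems l by (intro styl_cong_append_right snoc.IH) auto
  finally show ?case by simp
qed (simp add: styl_cong.refl)

lemma styl_cong_bump_absent:
  assumes "sorted_wrt (<) (L @ [a])" "\<forall>x\<in>set L. 1 \<le> x" "1 \<le> a" "a < y" "y \<le> n"
  shows "styl_cong n (L @ [y, a]) (y # L @ [a, y])"
proof -
  have "styl_cong n (L @ [y, a]) ((L @ [y, a]) @ [y])"
    using styl_cong_append_left[OF styl_cong_yay[OF assms(3-5)], of L] by (simp add: styl_cong.sym)
  also have "styl_cong n \<dots> ((y # L @ [a]) @ [y])"
    using assms by (intro styl_cong_append_right styl_cong_row_prepend_larger)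
  finally show ?thesis by simp
qed

lemma styl_cong_bump_present:
  assumes "sorted_wrt (<) (L @ [a])" "\<forall>x\<in>set L. 1 \<le> x" "1 \<le> a" "a < y" "y \<le> n"
  shows "styl_cong n (L @ [a, y, a]) (y # L @ [a, y])"
proof -
  have "styl_cong n (L @ [a, y, a]) (L @ [y, a])"
    using assms(3-5) by (intro styl_cong_append_left styl_cong_aya)
  also have "styl_cong n \<dots> (y # L @ [a, y])"
    using assms by (rule styl_cong_bump_absent)
  finally show ?thesis .
qed

lemma styl_cong_row_insert:
  assumes S: "finite S" "\<forall>x\<in>S. 1 \<le> x \<and> x \<le> n" and a: "1 \<le> a" "a \<le> n"
  shows "styl_cong n (row S @ [a]) (bump S a @ row (insert a S))"
proof (cases rule: bump_cases[of S a])
  case 1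
  show ?thesis
  proof (cases "a \<in> S")
    case True
    have "row S = row (S - {a}) @ [a]"
      using 1 True S(1) row_insert_max[of "S - {a}" a] by (fastforce simp: insert_absorb)
    then show ?thesis
      using 1 True styl_cong_append_left[OF styl_cong_idem[OF a], of "row (S - {a})"]
      by (simp add: insert_absorb)
  next
    case False
    then have "row (insert a S) = row S @ [a]"
      using 1 S(1) by (intro row_insert_max) (auto simp: order.order_iff_strict)
    then show ?thesis
      using 1 by (simp add: styl_cong.refl)
  qed
next
  case (2 y)
  define L where "L = row {x\<in>S. x < a}"
  define H where "H = row {x\<in>S. y < x}"
  define A where "A = (if a \<in> S then [a] else [])"
  have L: "sorted_wrt (<) (L @ [a])" "\<forall>x\<in>set L. 1 \<le> x"
    using S by (auto simp: L_def sorted_wrt_append)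
  have H: "sorted_wrt (<) (y # H)" "\<forall>h\<in>set H. h \<le> n"
    using S by (auto simp: H_def)
  have below: "{x \<in> insert a S. x < a} = {x\<in>S. x < a}"
    and above: "{x \<in> insert a S. y < x} = {x\<in>S. y < x}"
    using 2(3) by auto
  have "row (insert a S) =
      row {x \<in> insert a S. x < a} @ (if a \<in> insert a S then [a] else []) @
      y # row {x \<in> insert a S. y < x}"
    using S(1) 2(2-4) by (intro row_split) auto
  then have row_insert: "row (insert a S) = L @ a # y # H"
    unfolding below above L_def H_def by simp
  have "row S @ [a] = (L @ A) @ (y # H @ [a])"
    using row_split[OF S(1) 2(2-4)] by (simp add: L_def H_def A_def)
  also have "styl_cong n \<dots> ((L @ A) @ (y # a # H))"
    using H a 2(3) by (intro styl_cong_append_left styl_cong_row_snoc_smaller)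
  also have "\<dots> = (L @ A @ [y, a]) @ H"
    by simp
  also have "styl_cong n \<dots> ((y # L @ [a, y]) @ H)"
    using L a 2(2,3) S(2) styl_cong_bump_absent styl_cong_bump_present
    by (intro styl_cong_append_right) (auto simp: A_def)
  also have "\<dots> = bump S a @ row (insert a S)"
    unfolding row_insert 2(1) by simp
  finally show ?thesis .
qed

fun bump_word :: "nat set \<Rightarrow> nat list \<Rightarrow> nat list" where
  "bump_word S [] = []"
| "bump_word S (a # u) = bump S a @ bump_word (insert a S) u"

definition bumps :: "nat list \<Rightarrow> nat list" where
  "bumps u = bump_word {} u"

lemma bump_word_append: "bump_word S (u @ v) = bump_word S u @ bump_word (S \<union> set u) v"
  by (induction u arbitrary: S) auto

lemma bumps_snoc: "bumps (u @ [a]) = bumps u @ bump (set u) a"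
  by (simp add: bumps_def bump_word_append)

lemma set_bump_wordD: "y \<in> set (bump_word S u) \<Longrightarrow> y \<in> S \<union> set u \<and> (\<exists>a\<in>set u. a < y)"
  by (induction u arbitrary: S) (auto dest: set_bumpD)

lemma set_bumpsD: "y \<in> set (bumps u) \<Longrightarrow> y \<in> set u \<and> (\<exists>a\<in>set u. a < y)"
  unfolding bumps_def by (fastforce dest: set_bump_wordD)

(* The reading word, top row first, of the N-tableau of u with k rows. *)
fun tableau_word :: "nat \<Rightarrow> nat list \<Rightarrow> nat list" where
  "tableau_word 0 u = []"
| "tableau_word (Suc k) u = tableau_word k (bumps u) @ row (set u)"

lemma tableau_word_Nil: "tableau_word k [] = []"
  by (induction k) (auto simp: bumps_def)

(* Bumped letters exceed some letter of u, so a word over {n - k + 1..n} needs at most k rows. *)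
lemma styl_cong_tableau_word_snoc:
  "\<forall>x\<in>set u. n - k < x \<and> x \<le> n \<Longrightarrow> n - k < a \<Longrightarrow> a \<le> n
   \<Longrightarrow> styl_cong n (tableau_word k u @ [a]) (tableau_word k (u @ [a]))"
proof (induction k arbitrary: u a)
  case (Suc k)
  have bumps_bounded: "\<forall>x\<in>set (bumps u). n - k < x \<and> x \<le> n"
    using Suc.prems(1) by (fastforce dest: set_bumpsD)
  have "tableau_word (Suc k) u @ [a] = tableau_word k (bumps u) @ (row (set u) @ [a])"
    by simp
  also have "styl_cong n \<dots> (tableau_word k (bumps u) @ bump (set u) a @ row (insert a (set u)))"
    using Suc.prems by (intro styl_cong_append_left styl_cong_row_insert) auto
  also have "styl_cong n \<dots> (tableau_word k (bumps u @ bump (set u) a) @ row (insert a (set u)))"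
  proof (cases rule: bump_cases[of "set u" a])
    case 1
    then show ?thesis by (simp add: styl_cong.refl)
  next
    case (2 y)
    then have "n - k < y \<and> y \<le> n"
      using Suc.prems by auto
    then show ?thesis
      using Suc.IH[OF bumps_bounded] styl_cong_append_right 2(1) by fastforce
  qed
  also have "\<dots> = tableau_word (Suc k) (u @ [a])"
    by (simp add: bumps_snoc)
  finally show ?case .
qed simp

lemma styl_cong_tableau_word: "\<forall>x\<in>set u. 1 \<le> x \<and> x \<le> n \<Longrightarrow> styl_cong n u (tableau_word n u)"
proof (induction u rule: rev_induct)
  case (snoc a u)
  then have "styl_cong n (u @ [a]) (tableau_word n u @ [a])"
    by (intro styl_cong_append_right) auto
  also have "styl_cong n \<dots> (tableau_word n (u @ [a]))"
    using snoc.prems by (intro styl_cong_tableau_word_snoc) auto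
  finally show ?case .
qed (simp add: tableau_word_Nil styl_cong.refl)

lemma notin_bump_word:
  "p \<in> S \<Longrightarrow> p < y \<Longrightarrow> p \<notin> set w \<Longrightarrow> \<forall>b\<in>set w. \<not> (p < b \<and> b < y)
   \<Longrightarrow> y \<notin> set (bump_word S w)"
proof (induction w arbitrary: S)
  case (Cons b w)
  have "y \<notin> set (bump S b)"
  proof
    assume "y \<in> set (bump S b)"
    then have "b < y" "b < p \<longrightarrow> y \<le> p"
      using set_bumpD Cons.prems(1) by blast+
    then show False
      using Cons.prems by auto
  qed
  moreover have "y \<notin> set (bump_word (insert b S) w)"
    using Cons.prems by (intro Cons.IH) auto
  ultimately show ?case by simp
qed simp

(* p is the predecessor of y among the letters of u = v @ p # w: after the last p has been
   inserted no further y is bumped, and that p bumps y iff y occurs in v. *)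
lemma subseq_snoc_bumps_iff:
  assumes "p \<notin> set w" "p < y" and tight: "\<forall>z\<in>set (v @ p # w). \<not> (p < z \<and> z < y)"
  shows "subseq (s @ [y]) (bumps (v @ p # w)) \<longleftrightarrow> y \<in> set v \<and> subseq s (bumps v)"
proof -
  have bumps_split:
    "bumps (v @ p # w) = (bumps v @ bump (set v) p) @ bump_word (insert p (set v)) w"
    by (simp add: bumps_def bump_word_append)
  have "y \<notin> set (bump_word (insert p (set v)) w)"
    using assms by (intro notin_bump_word) auto
  then have "subseq (s @ [y]) (bumps (v @ p # w)) \<longleftrightarrow>
      subseq (s @ [y]) (bumps v @ bump (set v) p)"
    unfolding bumps_split by (rule subseq_snoc_append_notin)
  also have "\<dots> \<longleftrightarrow> y \<in> set v \<and> subseq s (bumps v)"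
  proof (cases "y \<in> set v")
    case True
    moreover have "y \<le> x" if "x \<in> set v" "p < x" for x
      using tight that by (simp add: not_less) (meson UnI1 leD)
    ultimately have "bump (set v) p = [y]"
      using assms(2) by (intro bump_eqI) auto
    then show ?thesis
      using True by simp
  next
    case False
    then have "y \<notin> set (bumps v @ bump (set v) p)"
      by (auto dest: set_bumpsD set_bumpD)
    then show ?thesis
      using False set_subseq by fastforce
  qed
  finally show ?thesis .
qed

lemma subseq_bumps_transfer:
  "simon_cong (Suc k) u u' \<Longrightarrow> length s \<le> k \<Longrightarrow> subseq s (bumps u) \<Longrightarrow> subseq s (bumps u')"
proof (induction s arbitrary: u u' k rule: rev_induct)
  case (snoc y s)
  obtain k' where k: "k = Suc k'"
    using snoc.prems(2) by (cases k) auto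
  have "y \<in> set (bumps u)"
    using set_subseq[OF snoc.prems(3)] by simp
  then obtain b where b: "b \<in> set u" "b < y"
    by (auto dest: set_bumpsD)
  define p where "p = Max {z \<in> set u. z < y}"
  have "p \<in> {z \<in> set u. z < y}"
    unfolding p_def using b by (intro Max_in) auto
  then have "p \<in> set u" "p < y"
    by auto
  have tight: "\<forall>z\<in>set u. \<not> (p < z \<and> z < y)"
    using Max_ge[of "{z \<in> set u. z < y}"] by (fastforce simp: p_def)
  have set_eq: "set u = set u'"
    using snoc.prems(1) by (rule simon_cong_set_eq)
  obtain v w where u: "u = v @ p # w" "p \<notin> set w"
    using split_list_last[OF \<open>p \<in> set u\<close>] by blast
  obtain v' w' where u': "u' = v' @ p # w'" "p \<notin> set w'"
    using split_list_last[of p u'] \<open>p \<in> set u\<close> set_eq by blast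
  have y_v: "y \<in> set v" and s_v: "subseq s (bumps v)"
    using subseq_snoc_bumps_iff[OF u(2) \<open>p < y\<close>] tight snoc.prems(3) u(1) by auto
  have "subseq ([y] @ [p]) u"
    using subseq_snoc_last_occurrence[OF u(2), of "[y]"] y_v u(1)
    by (simp add: subseq_singleton_left)
  then have "subseq ([y] @ [p]) u'"
    using snoc.prems(1) k unfolding simon_cong_def by simp
  then have "y \<in> set v'"
    using subseq_snoc_last_occurrence[OF u'(2), of "[y]"] u'(1)
    by (simp add: subseq_singleton_left)
  moreover have "subseq s (bumps v')"
    using snoc.prems(1,2) u u' k s_v
    by (intro snoc.IH[of k' v v']) (auto intro: simon_cong_last_occurrence)
  ultimately show ?case
    using subseq_snoc_bumps_iff[OF u'(2) \<open>p < y\<close>] tight set_eq u'(1) by auto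
qed simp

lemma simon_cong_bumps: "simon_cong (Suc k) u u' \<Longrightarrow> simon_cong k (bumps u) (bumps u')"
  using subseq_bumps_transfer simon_cong_sym unfolding simon_cong_def by blast

lemma tableau_word_simon_cong: "simon_cong k u u' \<Longrightarrow> tableau_word k u = tableau_word k u'"
proof (induction k arbitrary: u u')
  case (Suc k)
  then show ?case
    using Suc.IH[OF simon_cong_bumps[OF Suc.prems]] simon_cong_set_eq[OF Suc.prems] by simp
qed simp

lemma holds_in_styl_if_simon_cong:
  assumes "simon_cong n w w'"
  shows "holds_in_styl n w w'"
  unfolding holds_in_styl_def
proof (intro allI impI)
  fix \<phi> :: "'a list \<Rightarrow> nat list"
  assume hom: "styl_hom n \<phi>"
  define g where "g x = \<phi> [x]" for x
  have letters: "\<forall>x\<in>set (concat (map g v)). 1 \<le> x \<and> x \<le> n" for v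
    using hom unfolding styl_hom_def styl_words_def g_def by fastforce
  have "styl_cong n (\<phi> w) (concat (map g w))"
    unfolding g_def using hom by (rule styl_hom_concat_map_cong)
  also have "styl_cong n \<dots> (tableau_word n (concat (map g w)))"
    using letters by (rule styl_cong_tableau_word)
  also have "\<dots> = tableau_word n (concat (map g w'))"
    using assms by (intro tableau_word_simon_cong simon_cong_concat_map)
  also have "styl_cong n \<dots> (concat (map g w'))"
    using letters by (intro styl_cong.sym[OF styl_cong_tableau_word])
  also have "styl_cong n \<dots> (\<phi> w')"
    unfolding g_def using hom by (intro styl_cong.sym[OF styl_hom_concat_map_cong])
  finally show "styl_cong n (\<phi> w) (\<phi> w')" .
qed

theorem corollary1:
  fixes n :: nat and w w' :: "'x list"
  assumes "n \<ge> 2"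
  shows "holds_in_styl n w w' \<longleftrightarrow> scattered_subwords_le n w = scattered_subwords_le n w'"
proof -
  \<comment> \<open>The argument works for every n.\<close>
  have "holds_in_styl n w w' \<longleftrightarrow> simon_cong n w w'"
  proof
    assume "holds_in_styl n w w'"
    then show "simon_cong n w w'"
      using holds_in_styl_sym holds_in_styl_subseq unfolding simon_cong_def by metis
  qed (rule holds_in_styl_if_simon_cong)
  then show ?thesis
    by (simp add: scattered_subwords_le_eq_iff_simon_cong)
qed

end
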